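(* Let $G_1,G_2$ be finite, undirected, simple graphs with disjoint vertex sets, $V(G_1)=\{v_1,\dots,v_{n_1}\}$. Then $\alpha(G_1\,\mathrm{NS}\,G_2)\ge n_1+\alpha(G_2)$, $\alpha(G_1\,\mathrm{NNS}\,G_2)\ge n_1+\alpha(G_2)$, $\omega(G_1\,\mathrm{NS}\,G_2)=\omega(G_1)+\omega(G_2)=\omega(G_1\,\mathrm{NNS}\,G_2)$, $\chi(G_1\,\mathrm{NS}\,G_2)=\chi(G_1)+\chi(G_2)=\chi(G_1\,\mathrm{NNS}\,G_2)$, $\vartheta(G_1\,\mathrm{NS}\,G_2)\ge n_1+\vartheta(G_2)$, $\vartheta(G_1\,\mathrm{NNS}\,G_2)\ge n_1+\vartheta(G_2)$. Moreover: (i) if there is a permutation $\pi$ of $\{1,\dots,n_1\}$ with $\{v_i,v_{\pi(i)}\}\in E(G_1)$ for all $i$, then $\vartheta(G_1\,\mathrm{NS}\,G_2)=n_1+\vartheta(G_2)$; (ii) if there is a permutation $\pi$ of $\{1,\dots,n_1\}$ with $\pi(i)\ne i$ and $\{v_i,v_{\pi(i)}\}\notin E(G_1)$ for all $i$, then $\vartheta(G_1\,\mathrm{NNS}\,G_2)=n_1+\vartheta(G_2)$; (iii) if the condition in (i) holds and $\alpha(G_2)=\vartheta(G_2)$, then $\alpha(G_1\,\mathrm{NS}\,G_2)=n_1+\alpha(G_2)$; (iv) if the condition in (ii) holds and $\alpha(G_2)=\vartheta(G_2)$, then $\alpha(G_1\,\mathrm{NNS}\,G_2)=n_1+\alpha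(G_2)$.
   Context: The join $G_1\vee G_2$ is the disjoint union of $G_1,G_2$ together with all edges joining a vertex of $G_1$ to a vertex of $G_2$. The neighbors splitting (NS) join $G_1\,\mathrm{NS}\,G_2$ is obtained from $G_1\vee G_2$ by adding new vertices $v'_1,\dots,v'_{n_1}$ and joining $v'_i$ to $v_j$ iff $\{v_i,v_j\}\in E(G_1)$ (no other new edges). The nonneighbors splitting (NNS) join $G_1\,\mathrm{NNS}\,G_2$ is obtained from $G_1\vee G_2$ by adding new vertices $v'_1,\dots,v'_{n_1}$ and joining $v'_i$ to $v_j$, $i\ne j$, iff $\{v_i,v_j\}\notin E(G_1)$ (no other new edges). $\alpha,\omega,\chi$ are the independence, clique and chromatic numbers; $\vartheta(G)$ is the Lovász theta function: the maximum of $\mathrm{Tr}(BJ)$ over positive semidefinite $B$ indexed by $V(G)$ with $\mathrm{Tr}B=1$ and $B_{i,j}=0$ for $\{i,j\}\in E(G)$, $J$ the all-ones matrix. *)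

theory Defs
  imports Complex_Main
begin

type_synonym 'a graph = "'a set \<times> 'a set set"

definition verts :: "'a graph \<Rightarrow> 'a set" where "verts G = fst G"
definition edges :: "'a graph \<Rightarrow> 'a set set" where "edges G = snd G"

definition finite_simple_graph :: "'a graph \<Rightarrow> bool" where
  "finite_simple_graph G \<longleftrightarrow> finite (verts G) \<and>
     (\<forall>e\<in>edges G. \<exists>x y. x \<in> verts G \<and> y \<in> verts G \<and> x \<noteq> y \<and> e = {x, y})"

definition independent_set :: "'a graph \<Rightarrow> 'a set \<Rightarrow> bool" where
  "independent_set G S \<longleftrightarrow> S \<subseteq> verts G \<and> (\<forall>x\<in>S. \<forall>y\<in>S. {x, y} \<notin> edges G)"

definition clique :: "'a graph \<Rightarrow> 'a set \<Rightarrow> bool" where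
  "clique G S \<longleftrightarrow> S \<subseteq> verts G \<and> (\<forall>x\<in>S. \<forall>y\<in>S. x \<noteq> y \<longrightarrow> {x, y} \<in> edges G)"

definition alpha :: "'a graph \<Rightarrow> nat" where
  "alpha G = Max {card S | S. independent_set G S}"

definition omega :: "'a graph \<Rightarrow> nat" where
  "omega G = Max {card S | S. clique G S}"

definition proper_coloring :: "'a graph \<Rightarrow> nat \<Rightarrow> ('a \<Rightarrow> nat) \<Rightarrow> bool" where
  "proper_coloring G k f \<longleftrightarrow> (\<forall>v\<in>verts G. f v < k) \<and>
     (\<forall>x\<in>verts G. \<forall>y\<in>verts G. {x, y} \<in> edges G \<longrightarrow> f x \<noteq> f y)"

definition chi :: "'a graph \<Rightarrow> nat" where
  "chi G = (LEAST k. \<exists>f. proper_coloring G k f)"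

text \<open>Feasible matrices for the Lovasz theta function: real matrices B indexed by V(G)
  (represented as functions, only entries on V(G) matter), symmetric positive
  semidefinite, trace 1, and B(i,j) = 0 whenever {i,j} is an edge.\<close>

definition theta_feasible :: "'a graph \<Rightarrow> ('a \<Rightarrow> 'a \<Rightarrow> real) \<Rightarrow> bool" where
  "theta_feasible G B \<longleftrightarrow>
     (\<forall>i\<in>verts G. \<forall>j\<in>verts G. B i j = B j i) \<and>
     (\<forall>x::'a \<Rightarrow> real. (\<Sum>i\<in>verts G. \<Sum>j\<in>verts G. x i * B i j * x j) \<ge> 0) \<and>
     (\<Sum>i\<in>verts G. B i i) = 1 \<and>
     (\<forall>i\<in>verts G. \<forall>j\<in>verts G. {i, j} \<in> edges G \<longrightarrow> B i j = 0)"

definition theta :: "'a graph \<Rightarrow> real" where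
  "theta G = Sup {(\<Sum>i\<in>verts G. \<Sum>j\<in>verts G. B i j) | B. theta_feasible G B}"

text \<open>Join of G1 (vertices of type 'a) and G2 (vertices of type 'b); disjointness
  of the vertex sets is realised by the sum type.\<close>
definition join :: "'a graph \<Rightarrow> 'b graph \<Rightarrow> ('a + 'b) graph" where
  "join G1 G2 =
     (Inl ` verts G1 \<union> Inr ` verts G2,
      (image Inl) ` edges G1 \<union> (image Inr) ` edges G2 \<union>
      {{Inl u, Inr w} | u w. u \<in> verts G1 \<and> w \<in> verts G2})"

text \<open>Splitting joins: the new vertex v'_i is Inr v_i.\<close>
definition NS_join :: "'a graph \<Rightarrow> 'b graph \<Rightarrow> (('a + 'b) + 'a) graph" where
  "NS_join G1 G2 =
     (Inl ` verts (join G1 G2) \<union> Inr ` verts G1,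
      (image Inl) ` edges (join G1 G2) \<union>
      {{Inr u, Inl (Inl w)} | u w. u \<in> verts G1 \<and> w \<in> verts G1 \<and> {u, w} \<in> edges G1})"

definition NNS_join :: "'a graph \<Rightarrow> 'b graph \<Rightarrow> (('a + 'b) + 'a) graph" where
  "NNS_join G1 G2 =
     (Inl ` verts (join G1 G2) \<union> Inr ` verts G1,
      (image Inl) ` edges (join G1 G2) \<union>
      {{Inr u, Inl (Inl w)} | u w. u \<in> verts G1 \<and> w \<in> verts G1 \<and> u \<noteq> w \<and> {u, w} \<notin> edges G1})"

end

theory Submission
  imports Defs "HOL-Library.Indicator_Function"
begin

(* The n new vertices v'_i are pairwise non-adjacent and have no neighbours in G2.  So they extend
   every independent set of G2, a clique contains at most one of them and then avoids G2, and they
   can all share one colour of G2; this settles alpha, omega and chi.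

   For the lower bound on theta, a feasible matrix B of G2 of value s is bordered by an all-ones
   block on the new vertices and by the column sums of B; by Cauchy-Schwarz the result is positive
   semidefinite, and normalised it is feasible of value n + s.  For the upper bound, pi covers the
   vertices by the copy of G2 and n disjoint edges {v_pi(i), v'_i}.  A positive semidefinite form
   satisfies q(y_1 + ... + y_m) <= (c_1 + ... + c_m) (q(y_1)/c_1 + ... + q(y_m)/c_m); a feasible
   matrix is diagonal on each edge, and its block on the copy of G2 is at most theta(G2) times its
   trace.  Hence every feasible matrix has value at most theta(G2) + n, and with alpha <= theta
   this also gives the equalities for alpha. *)

section \<open>Positive semidefinite quadratic forms\<close>

definition quad_form :: "'v set \<Rightarrow> ('v \<Rightarrow> 'v \<Rightarrow> real) \<Rightarrow> ('v \<Rightarrow> real) \<Rightarrow> real" where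
  "quad_form V B x = (\<Sum>i\<in>V. \<Sum>j\<in>V. x i * B i j * x j)"

definition bilin_form :: "'v set \<Rightarrow> ('v \<Rightarrow> 'v \<Rightarrow> real) \<Rightarrow> ('v \<Rightarrow> real) \<Rightarrow> ('v \<Rightarrow> real) \<Rightarrow> real" where
  "bilin_form V B x y = (\<Sum>i\<in>V. \<Sum>j\<in>V. x i * B i j * y j)"

definition symmetric_on :: "'v set \<Rightarrow> ('v \<Rightarrow> 'v \<Rightarrow> real) \<Rightarrow> bool" where
  "symmetric_on V B \<longleftrightarrow> (\<forall>i\<in>V. \<forall>j\<in>V. B i j = B j i)"

definition psd_on :: "'v set \<Rightarrow> ('v \<Rightarrow> 'v \<Rightarrow> real) \<Rightarrow> bool" where
  "psd_on V B \<longleftrightarrow> (\<forall>x. 0 \<le> quad_form V B x)"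

lemma quad_form_lincomb:
  assumes "symmetric_on V B"
  shows "quad_form V B (\<lambda>i. a * x i + b * y i) =
    a\<^sup>2 * quad_form V B x + 2 * a * b * bilin_form V B x y + b\<^sup>2 * quad_form V B y"
proof -
  have swap: "(\<Sum>i\<in>V. \<Sum>j\<in>V. y i * B i j * x j) = bilin_form V B x y"
    unfolding bilin_form_def using assms
    by (subst sum.swap) (auto intro!: sum.cong simp: symmetric_on_def mult_ac)
  have "quad_form V B (\<lambda>i. a * x i + b * y i) =
      (\<Sum>i\<in>V. \<Sum>j\<in>V. a\<^sup>2 * (x i * B i j * x j) + a * b * (x i * B i j * y j)
        + a * b * (y i * B i j * x j) + b\<^sup>2 * (y i * B i j * y j))"
    unfolding quad_form_def by (intro sum.cong refl) (simp add: algebra_simps power2_eq_square)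
  also have "\<dots> = a\<^sup>2 * quad_form V B x + a * b * bilin_form V B x y
      + a * b * (\<Sum>i\<in>V. \<Sum>j\<in>V. y i * B i j * x j) + b\<^sup>2 * quad_form V B y"
    by (simp add: quad_form_def bilin_form_def sum.distrib sum_distrib_left)
  finally show ?thesis using swap by simp
qed

lemma quad_form_indicator:
  assumes "finite V" "T \<subseteq> V"
  shows "quad_form V B (indicator T) = (\<Sum>i\<in>T. \<Sum>j\<in>T. B i j)"
proof -
  have "V \<inter> T = T" using assms(2) by blast
  then show ?thesis
    using assms(1) by (simp add: quad_form_def mult.assoc flip: sum_distrib_left)
qed

lemma quad_form_restrict:
  assumes "finite V" "W \<subseteq> V" "\<And>i. i \<in> V - W \<Longrightarrow> x i = 0"
  shows "quad_form V B x = quad_form W B x"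
proof -
  have "(\<Sum>j\<in>V. x i * B i j * x j) = (\<Sum>j\<in>W. x i * B i j * x j)" for i
    using assms by (intro sum.mono_neutral_right) auto
  then have "quad_form V B x = (\<Sum>i\<in>V. \<Sum>j\<in>W. x i * B i j * x j)"
    by (simp add: quad_form_def)
  also have "\<dots> = quad_form W B x"
    unfolding quad_form_def using assms by (intro sum.mono_neutral_right) auto
  finally show ?thesis .
qed

lemma psd_on_reindex:
  assumes "finite V" "psd_on V B" "inj_on f U" "f ` U \<subseteq> V"
  shows "psd_on U (\<lambda>u w. B (f u) (f w))"
  unfolding psd_on_def
proof
  fix x :: "_ \<Rightarrow> real"
  define y where "y i = (if i \<in> f ` U then x (inv_into U f i) else 0)" for i
  have "quad_form U (\<lambda>u w. B (f u) (f w)) x = quad_form (f ` U) B y"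
    using assms(3) by (simp add: quad_form_def y_def sum.reindex)
  also have "\<dots> = quad_form V B y"
    using assms(1,4) by (intro quad_form_restrict[symmetric]) (auto simp: y_def)
  finally show "0 \<le> quad_form U (\<lambda>u w. B (f u) (f w)) x"
    using assms(2) by (simp add: psd_on_def)
qed

lemma psd_on_divide:
  assumes "psd_on V B" "0 < t"
  shows "psd_on V (\<lambda>i j. B i j / t)"
  using assms by (simp add: psd_on_def quad_form_def sum_divide_distrib[symmetric])

context
  fixes V :: "'v set" and B :: "'v \<Rightarrow> 'v \<Rightarrow> real"
  assumes sym: "symmetric_on V B" and psd: "psd_on V B"
begin

lemma bilin_form_Cauchy_Schwarz: "(bilin_form V B x y)\<^sup>2 \<le> quad_form V B x * quad_form V B y"
proof -
  define p q r where "p = quad_form V B x" and "q = quad_form V B y" and "r = bilin_form V B x y"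
  have nonneg: "0 \<le> a\<^sup>2 * p + 2 * a * r + q" for a
  proof -
    have "0 \<le> quad_form V B (\<lambda>i. a * x i + 1 * y i)" using psd unfolding psd_on_def by blast
    then show ?thesis unfolding quad_form_lincomb[OF sym] p_def q_def r_def by simp
  qed
  have "0 \<le> p" "0 \<le> q" using psd unfolding psd_on_def p_def q_def by auto
  show ?thesis
  proof (cases "p = 0")
    case True
    have "r = 0"
    proof (rule ccontr)
      assume "r \<noteq> 0"
      with nonneg[of "- (q + 1) / (2 * r)"] True show False by (simp add: field_simps)
    qed
    then show ?thesis using \<open>0 \<le> p\<close> \<open>0 \<le> q\<close> unfolding p_def q_def r_def by simp
  next
    case False
    with \<open>0 \<le> p\<close> have "0 < p" by simp
    with nonneg[of "- r / p"] have "r\<^sup>2 \<le> p * q" by (simp add: field_simps power2_eq_square)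
    then show ?thesis unfolding p_def q_def r_def .
  qed
qed

lemma quad_form_add_le:
  assumes "0 < c" "0 < d"
  shows "quad_form V B (\<lambda>i. x i + y i) \<le> (c + d) * (quad_form V B x / c + quad_form V B y / d)"
proof -
  define p q r where "p = quad_form V B x" and "q = quad_form V B y" and "r = bilin_form V B x y"
  have "0 \<le> quad_form V B (\<lambda>i. d * x i + (- c) * y i)" using psd unfolding psd_on_def by blast
  then have "2 * c * d * r \<le> d\<^sup>2 * p + c\<^sup>2 * q"
    unfolding quad_form_lincomb[OF sym] p_def q_def r_def by (simp add: algebra_simps)
  moreover have "quad_form V B (\<lambda>i. x i + y i) = p + 2 * r + q"
    using quad_form_lincomb[OF sym, of 1 x 1 y] unfolding p_def q_def r_def by simp
  ultimately show ?thesis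
    using assms unfolding p_def[symmetric] q_def[symmetric]
    by (simp add: field_simps power2_eq_square)
qed

lemma quad_form_sum_le:
  assumes "finite K" "\<And>k. k \<in> K \<Longrightarrow> 0 < c k"
  shows "quad_form V B (\<lambda>i. \<Sum>k\<in>K. y k i) \<le> (\<Sum>k\<in>K. c k) * (\<Sum>k\<in>K. quad_form V B (y k) / c k)"
  using assms
proof (induction K rule: finite_induct)
  case empty
  then show ?case by (simp add: quad_form_def)
next
  case (insert k F)
  show ?case
  proof (cases "F = {}")
    case True
    then show ?thesis using insert.prems by simp
  next
    case False
    let ?C = "\<Sum>l\<in>F. c l"
    have "0 < ?C" using insert.prems False insert.hyps(1) by (intro sum_pos) auto
    have "0 < c k" using insert.prems by simp
    have "quad_form V B (\<lambda>i. \<Sum>l\<in>insert k F. y l i) = quad_form V B (\<lambda>i. y k i + (\<Sum>l\<in>F. y l i))"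
      using insert.hyps by simp
    also have "\<dots> \<le> (c k + ?C) * (quad_form V B (y k) / c k + quad_form V B (\<lambda>i. \<Sum>l\<in>F. y l i) / ?C)"
      using \<open>0 < c k\<close> \<open>0 < ?C\<close> by (rule quad_form_add_le)
    also have "\<dots> \<le> (c k + ?C) * (quad_form V B (y k) / c k + (\<Sum>l\<in>F. quad_form V B (y l) / c l))"
    proof -
      have "quad_form V B (\<lambda>i. \<Sum>l\<in>F. y l i) / ?C \<le> (\<Sum>l\<in>F. quad_form V B (y l) / c l)"
        using insert.IH insert.prems \<open>0 < ?C\<close> by (simp add: divide_le_eq mult.commute)
      then show ?thesis using \<open>0 < c k\<close> \<open>0 < ?C\<close> by (intro mult_left_mono) auto
    qed
    also have "\<dots> = (\<Sum>l\<in>insert k F. c l) * (\<Sum>l\<in>insert k F. quad_form V B (y l) / c l)"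
      using insert.hyps by simp
    finally show ?thesis .
  qed
qed

lemma psd_diag_nonneg:
  assumes "finite V" "i \<in> V"
  shows "0 \<le> B i i"
proof -
  have "quad_form V B (indicator {i}) = B i i" using assms quad_form_indicator[of V "{i}" B] by simp
  then show ?thesis using psd unfolding psd_on_def by metis
qed

lemma psd_sum_le_partition:
  assumes "finite V" "finite K" "disjoint_family_on S K" "\<And>k. k \<in> K \<Longrightarrow> S k \<subseteq> V"
    and "\<And>k. k \<in> K \<Longrightarrow> 0 < c k"
    and block: "\<And>k. k \<in> K \<Longrightarrow> (\<Sum>i\<in>S k. \<Sum>j\<in>S k. B i j) \<le> c k * (\<Sum>i\<in>S k. B i i)"
  shows "(\<Sum>i\<in>\<Union>(S ` K). \<Sum>j\<in>\<Union>(S ` K). B i j) \<le> sum c K * (\<Sum>i\<in>\<Union>(S ` K). B i i)"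
proof -
  have "0 \<le> sum c K" using assms(5) by (simp add: sum_nonneg less_imp_le)
  have fin: "finite (S k)" if "k \<in> K" for k using assms(1,4) that finite_subset by blast
  have "(\<Sum>i\<in>\<Union>(S ` K). \<Sum>j\<in>\<Union>(S ` K). B i j) = quad_form V B (indicator (\<Union>(S ` K)))"
    using assms(1,4) by (simp add: quad_form_indicator UN_least)
  also have "indicator (\<Union>(S ` K)) = (\<lambda>i. \<Sum>k\<in>K. indicator (S k) i)"
    using assms(2,3) by (intro ext indicator_UN_disjoint)
  also have "quad_form V B (\<lambda>i. \<Sum>k\<in>K. indicator (S k) i)
      \<le> sum c K * (\<Sum>k\<in>K. quad_form V B (indicator (S k)) / c k)"
    using assms(2,5) by (rule quad_form_sum_le)
  also have "\<dots> \<le> sum c K * (\<Sum>k\<in>K. \<Sum>i\<in>S k. B i i)"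
    using \<open>0 \<le> sum c K\<close> assms(1,4,5) block
    by (intro mult_left_mono sum_mono) (simp_all add: quad_form_indicator divide_le_eq mult.commute)
  also have "(\<Sum>k\<in>K. \<Sum>i\<in>S k. B i i) = (\<Sum>i\<in>\<Union>(S ` K). B i i)"
    using assms(2,3) fin by (simp add: sum.UNION_disjoint_family)
  finally show ?thesis .
qed

lemma psd_block_sum_le:
  assumes "finite V" "W \<subseteq> V"
  shows "(\<Sum>i\<in>W. \<Sum>j\<in>W. B i j) \<le> real (card W) * (\<Sum>i\<in>W. B i i)"
  using psd_sum_le_partition[OF assms(1), of W "\<lambda>k. {k}" "\<lambda>_. 1"] assms finite_subset[OF assms(2)]
  by (force simp: disjoint_family_on_def)

lemma psd_border_nonneg:
  "0 \<le> X\<^sup>2 + 2 * X * (\<Sum>j\<in>V. (\<Sum>i\<in>V. B i j) * z j) + (\<Sum>i\<in>V. \<Sum>j\<in>V. B i j) * quad_form V B z"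
proof -
  define L where "L = (\<Sum>j\<in>V. (\<Sum>i\<in>V. B i j) * z j)"
  have "bilin_form V B (\<lambda>_. 1) z = L"
    unfolding bilin_form_def L_def by (subst sum.swap) (simp add: sum_distrib_right)
  moreover have "quad_form V B (\<lambda>_. 1) = (\<Sum>i\<in>V. \<Sum>j\<in>V. B i j)"
    by (simp add: quad_form_def)
  ultimately have "L\<^sup>2 \<le> (\<Sum>i\<in>V. \<Sum>j\<in>V. B i j) * quad_form V B z"
    using bilin_form_Cauchy_Schwarz[of "\<lambda>_. 1" z] by simp
  moreover have "0 \<le> (X + L)\<^sup>2" by simp
  ultimately show ?thesis unfolding L_def[symmetric] by (simp add: power2_eq_square algebra_simps)
qed

end

section \<open>Independence, clique and chromatic numbers\<close>

lemma finite_simple_graph_no_loop: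
  assumes "finite_simple_graph G"
  shows "{v} \<notin> edges G"
proof
  assume "{v} \<in> edges G"
  then obtain x y where "x \<noteq> y" "{v} = {x, y}"
    using assms unfolding finite_simple_graph_def by blast
  then show False by auto
qed

lemma independent_set_singleton: "finite_simple_graph G \<Longrightarrow> v \<in> verts G \<Longrightarrow> independent_set G {v}"
  by (simp add: independent_set_def finite_simple_graph_no_loop)

lemma card_le_Max_card:
  assumes "finite V" "\<And>S. Q S \<Longrightarrow> S \<subseteq> V" "Q S"
  shows "card S \<le> Max {card S | S. Q S}"
proof (rule Max_ge)
  have "{card S | S. Q S} \<subseteq> card ` Pow V" using assms(2) by blast
  then show "finite {card S | S. Q S}" using assms(1) finite_subset by blast
qed (use assms(3) in blast)

lemma Max_card_attained:
  assumes "finite V" "\<And>S. Q S \<Longrightarrow> S \<subseteq> V" "Q {}"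
  shows "\<exists>S. Q S \<and> card S = Max {card S | S. Q S}"
proof -
  have "{card S | S. Q S} \<subseteq> card ` Pow V" using assms(2) by blast
  then have "finite {card S | S. Q S}" using assms(1) finite_subset by blast
  moreover have "{card S | S. Q S} \<noteq> {}" using assms(3) by blast
  ultimately have "Max {card S | S. Q S} \<in> {card S | S. Q S}" by (rule Max_in)
  then show ?thesis by auto
qed

lemma card_le_alpha: "finite (verts G) \<Longrightarrow> independent_set G S \<Longrightarrow> card S \<le> alpha G"
  unfolding alpha_def by (rule card_le_Max_card) (auto simp: independent_set_def)

lemma alpha_attained: "finite (verts G) \<Longrightarrow> \<exists>S. independent_set G S \<and> card S = alpha G"
  unfolding alpha_def by (rule Max_card_attained) (auto simp: independent_set_def)

lemma card_le_omega: "finite (verts G) \<Longrightarrow> clique G S \<Longrightarrow> card S \<le> omega G"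
  unfolding omega_def by (rule card_le_Max_card) (auto simp: clique_def)

lemma omega_attained: "finite (verts G) \<Longrightarrow> \<exists>S. clique G S \<and> card S = omega G"
  unfolding omega_def by (rule Max_card_attained) (auto simp: clique_def)

lemma one_le_omega:
  assumes "finite (verts G)" "verts G \<noteq> {}"
  shows "1 \<le> omega G"
proof -
  obtain v where "v \<in> verts G" using assms(2) by blast
  then have "clique G {v}" by (simp add: clique_def)
  then show ?thesis using card_le_omega[OF assms(1)] by fastforce
qed

lemma chi_le: "proper_coloring G k f \<Longrightarrow> chi G \<le> k"
  unfolding chi_def by (rule Least_le) blast

lemma chi_le_card_image:
  assumes "finite (verts G)"
    and "\<And>x y. x \<in> verts G \<Longrightarrow> y \<in> verts G \<Longrightarrow> {x, y} \<in> edges G \<Longrightarrow> f x \<noteq> (f y :: nat)"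
  shows "chi G \<le> card (f ` verts G)"
proof -
  obtain h :: "nat \<Rightarrow> nat" and n where h: "inj_on h (f ` verts G)" "h ` f ` verts G = {i. i < n}"
    using finite_imp_inj_to_nat_seg[OF finite_imageI[OF assms(1), of f]] by blast
  have "proper_coloring G n (h \<circ> f)"
    unfolding proper_coloring_def
  proof (intro conjI ballI impI)
    show "(h \<circ> f) v < n" if "v \<in> verts G" for v
    proof -
      have "h (f v) \<in> h ` f ` verts G" using that by blast
      then show ?thesis using h(2) by simp
    qed
    show "(h \<circ> f) x \<noteq> (h \<circ> f) y" if "x \<in> verts G" "y \<in> verts G" "{x, y} \<in> edges G" for x y
      using assms(2)[OF that] h(1) that by (simp add: inj_on_eq_iff)
  qed
  then have "chi G \<le> n" by (rule chi_le)
  moreover have "card (f ` verts G) = n"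
    using card_image[OF h(1)] h(2) by simp
  ultimately show ?thesis by simp
qed

lemma chi_attained:
  assumes "finite_simple_graph G"
  shows "\<exists>f. proper_coloring G (chi G) f"
proof -
  obtain h :: "'a \<Rightarrow> nat" and n where h: "inj_on h (verts G)" "h ` verts G = {i. i < n}"
    using finite_imp_inj_to_nat_seg[of "verts G"] assms unfolding finite_simple_graph_def by blast
  have "proper_coloring G n h"
    unfolding proper_coloring_def
  proof (intro conjI ballI impI)
    show "h v < n" if "v \<in> verts G" for v
    proof -
      have "h v \<in> h ` verts G" using that by blast
      then show ?thesis using h(2) by simp
    qed
    show "h x \<noteq> h y" if "x \<in> verts G" "y \<in> verts G" "{x, y} \<in> edges G" for x y
      using h(1) that finite_simple_graph_no_loop[OF assms, of x] by (auto simp: inj_on_eq_iff)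
  qed
  then show ?thesis
    unfolding chi_def by (intro LeastI_ex[where P = "\<lambda>k. \<exists>f. proper_coloring G k f"]) blast
qed

section \<open>The Lovasz theta function\<close>

lemma theta_feasible_iff:
  "theta_feasible G B \<longleftrightarrow> symmetric_on (verts G) B \<and> psd_on (verts G) B \<and>
     (\<Sum>i\<in>verts G. B i i) = 1 \<and> (\<forall>i\<in>verts G. \<forall>j\<in>verts G. {i, j} \<in> edges G \<longrightarrow> B i j = 0)"
  by (simp add: theta_feasible_def symmetric_on_def psd_on_def quad_form_def)

lemma theta_feasible_sum_le_card:
  assumes "finite (verts G)" "theta_feasible G B"
  shows "(\<Sum>i\<in>verts G. \<Sum>j\<in>verts G. B i j) \<le> real (card (verts G))"
  using assms psd_block_sum_le[of "verts G" B "verts G"] by (simp add: theta_feasible_iff)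

lemma theta_feasible_sum_le_theta:
  assumes "finite (verts G)" "theta_feasible G B"
  shows "(\<Sum>i\<in>verts G. \<Sum>j\<in>verts G. B i j) \<le> theta G"
  unfolding theta_def
proof (rule cSup_upper)
  show "bdd_above {\<Sum>i\<in>verts G. \<Sum>j\<in>verts G. B i j |B. theta_feasible G B}"
    using theta_feasible_sum_le_card[OF assms(1)] unfolding bdd_above_def by blast
qed (use assms(2) in blast)

lemma theta_le:
  assumes "\<exists>B. theta_feasible G B"
    and "\<And>B. theta_feasible G B \<Longrightarrow> (\<Sum>i\<in>verts G. \<Sum>j\<in>verts G. B i j) \<le> c"
  shows "theta G \<le> c"
  unfolding theta_def using assms by (intro cSup_least) auto

lemma independent_set_theta_feasible:
  assumes "finite (verts G)" "independent_set G S" "S \<noteq> {}"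
  defines "B \<equiv> \<lambda>i j. indicator S i * indicator S j / real (card S)"
  shows "theta_feasible G B" and "(\<Sum>i\<in>verts G. \<Sum>j\<in>verts G. B i j) = real (card S)"
proof -
  have S: "S \<subseteq> verts G" "verts G \<inter> S = S" using assms(2) by (auto simp: independent_set_def)
  have "finite S" using assms(1) S(1) finite_subset by blast
  with assms(3) have "0 < card S" by (simp add: card_gt_0_iff)
  have card: "(\<Sum>i\<in>verts G. indicator S i) = real (card S)"
    using sum_indicator_mult[OF assms(1), where f = "\<lambda>_. 1 :: real" and B = S] S(2) by simp
  have "quad_form (verts G) B x = (\<Sum>i\<in>S. x i)\<^sup>2 / real (card S)" for x
  proof -
    have "quad_form (verts G) B x =
        (\<Sum>i\<in>verts G. indicator S i * (\<Sum>j\<in>verts G. indicator S j * (x i * x j / card S)))"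
      unfolding quad_form_def B_def sum_distrib_left by (intro sum.cong refl) (simp add: mult_ac)
    also have "\<dots> = (\<Sum>i\<in>S. \<Sum>j\<in>S. x i * x j / card S)"
      using assms(1) S(2) by (simp del: times_divide_eq_right)
    finally show ?thesis by (simp add: power2_eq_square sum_product sum_divide_distrib)
  qed
  then have "psd_on (verts G) B" by (simp add: psd_on_def)
  moreover have "(\<Sum>i\<in>verts G. B i i) = 1"
    using assms(1) S(2) \<open>0 < card S\<close>
    by (simp add: B_def card flip: indicator_inter_arith sum_divide_distrib)
  moreover have "B i j = 0" if "i \<in> verts G" "j \<in> verts G" "{i, j} \<in> edges G" for i j
    using assms(2) that by (auto simp: B_def independent_set_def indicator_def)
  ultimately show "theta_feasible G B"
    by (simp add: theta_feasible_iff symmetric_on_def B_def mult.commute)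
  show "(\<Sum>i\<in>verts G. \<Sum>j\<in>verts G. B i j) = real (card S)"
  proof -
    have "(\<Sum>i\<in>verts G. \<Sum>j\<in>verts G. B i j) =
        (\<Sum>i\<in>verts G. indicator S i) * (\<Sum>j\<in>verts G. indicator S j) / real (card S)"
      by (simp add: B_def sum_product sum_divide_distrib)
    then show ?thesis using card \<open>0 < card S\<close> by simp
  qed
qed

lemma card_independent_set_le_theta:
  assumes "finite (verts G)" "independent_set G S" "S \<noteq> {}"
  shows "real (card S) \<le> theta G"
  using theta_feasible_sum_le_theta[OF assms(1) independent_set_theta_feasible(1)[OF assms]]
    independent_set_theta_feasible(2)[OF assms] by simp

lemma theta_feasible_exists:
  assumes "finite_simple_graph G" "verts G \<noteq> {}"
  shows "\<exists>B. theta_feasible G B"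
proof -
  obtain v where "v \<in> verts G" using assms(2) by blast
  then show ?thesis
    using independent_set_theta_feasible(1)[OF _ independent_set_singleton[OF assms(1)]] assms(1)
    by (auto simp: finite_simple_graph_def)
qed

lemma one_le_theta:
  assumes "finite_simple_graph G" "verts G \<noteq> {}"
  shows "1 \<le> theta G"
proof -
  obtain v where "v \<in> verts G" using assms(2) by blast
  then show ?thesis
    using card_independent_set_le_theta[OF _ independent_set_singleton[OF assms(1)]] assms(1)
    by (auto simp: finite_simple_graph_def)
qed

lemma alpha_le_theta:
  assumes "finite_simple_graph G" "verts G \<noteq> {}"
  shows "real (alpha G) \<le> theta G"
proof -
  have fin: "finite (verts G)" using assms(1) by (simp add: finite_simple_graph_def)
  obtain S where S: "independent_set G S" "card S = alpha G" using alpha_attained[OF fin] by blast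
  show ?thesis
  proof (cases "S = {}")
    case True
    then show ?thesis using S one_le_theta[OF assms] by simp
  next
    case False
    then show ?thesis using S card_independent_set_le_theta[OF fin S(1)] by simp
  qed
qed

lemma theta_feasible_clique_sum:
  assumes "finite (verts G)" "theta_feasible G B" "clique G S"
  shows "(\<Sum>i\<in>S. \<Sum>j\<in>S. B i j) = (\<Sum>i\<in>S. B i i)"
proof (rule sum.cong[OF refl])
  fix i assume "i \<in> S"
  have S: "S \<subseteq> verts G" "finite S"
    using assms(1,3) finite_subset by (auto simp: clique_def)
  have "B i j = 0" if "j \<in> S" "j \<noteq> i" for j
  proof -
    have "{i, j} \<in> edges G" using assms(3) that \<open>i \<in> S\<close> by (auto simp: clique_def)
    moreover have "i \<in> verts G" "j \<in> verts G" using S(1) that(1) \<open>i \<in> S\<close> by auto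
    ultimately show ?thesis using assms(2) by (simp add: theta_feasible_iff)
  qed
  then have "(\<Sum>j\<in>S. B i j) = (\<Sum>j\<in>S. if j = i then B i i else 0)"
    by (intro sum.cong) auto
  then show "(\<Sum>j\<in>S. B i j) = B i i" using \<open>i \<in> S\<close> S(2) by simp
qed

lemma theta_feasible_subgraph_sum_le:
  assumes "finite (verts H)" "theta_feasible H B" "inj_on f (verts G)" "f ` verts G \<subseteq> verts H"
    and edges: "\<And>u w. u \<in> verts G \<Longrightarrow> w \<in> verts G \<Longrightarrow> {u, w} \<in> edges G \<Longrightarrow> {f u, f w} \<in> edges H"
  shows "(\<Sum>i\<in>f ` verts G. \<Sum>j\<in>f ` verts G. B i j) \<le> theta G * (\<Sum>i\<in>f ` verts G. B i i)"
proof -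
  define t where "t = (\<Sum>i\<in>f ` verts G. B i i)"
  have finG: "finite (verts G)"
    using assms(1,3,4) finite_imageD finite_subset by blast
  have sym: "symmetric_on (verts H) B" and psd: "psd_on (verts H) B"
    and zero: "\<And>i j. i \<in> verts H \<Longrightarrow> j \<in> verts H \<Longrightarrow> {i, j} \<in> edges H \<Longrightarrow> B i j = 0"
    using assms(2) by (auto simp: theta_feasible_iff)
  have "0 \<le> t"
    unfolding t_def using assms(1,4) by (intro sum_nonneg psd_diag_nonneg[OF sym psd]) auto
  show ?thesis
  proof (cases "t = 0")
    case True
    then show ?thesis
      using psd_block_sum_le[OF sym psd assms(1,4)] by (simp add: t_def)
  next
    case False
    with \<open>0 \<le> t\<close> have "0 < t" by simp
    define B' where "B' u w = B (f u) (f w) / t" for u w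
    have "theta_feasible G B'"
      unfolding theta_feasible_iff
    proof (intro conjI ballI impI)
      show "symmetric_on (verts G) B'"
        using sym assms(4) by (auto simp: symmetric_on_def B'_def)
      show "psd_on (verts G) B'"
        unfolding B'_def by (intro psd_on_divide psd_on_reindex[OF assms(1) psd assms(3,4)] \<open>0 < t\<close>)
      show "(\<Sum>u\<in>verts G. B' u u) = 1"
        using \<open>0 < t\<close> assms(3) by (simp add: B'_def t_def sum.reindex flip: sum_divide_distrib)
      show "B' u w = 0" if "u \<in> verts G" "w \<in> verts G" "{u, w} \<in> edges G" for u w
      proof -
        have "f u \<in> verts H" "f w \<in> verts H" using that(1,2) assms(4) by auto
        then show ?thesis using zero edges[OF that] by (simp add: B'_def)
      qed
    qed
    then have "(\<Sum>u\<in>verts G. \<Sum>w\<in>verts G. B' u w) \<le> theta G"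
      by (rule theta_feasible_sum_le_theta[OF finG])
    then show ?thesis
      using \<open>0 < t\<close> assms(3)
      by (simp add: B'_def t_def sum.reindex pos_divide_le_eq flip: sum_divide_distrib)
  qed
qed

lemma theta_le_theta_plus_card_cliques:
  fixes I :: "'i set"
  assumes H: "finite_simple_graph H" "verts H \<noteq> {}"
    and G: "finite_simple_graph G" "verts G \<noteq> {}"
    and f: "inj_on f (verts G)"
    and f_edges: "\<And>u w. u \<in> verts G \<Longrightarrow> w \<in> verts G \<Longrightarrow> {u, w} \<in> edges G \<Longrightarrow> {f u, f w} \<in> edges H"
    and Q: "finite I" "disjoint_family_on Q I" "\<And>i. i \<in> I \<Longrightarrow> clique H (Q i)"
    and cover: "verts H = f ` verts G \<union> (\<Union>i\<in>I. Q i)" "f ` verts G \<inter> (\<Union>i\<in>I. Q i) = {}"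
  shows "theta H \<le> theta G + real (card I)"
proof (rule theta_le)
  have finH: "finite (verts H)" using H(1) by (simp add: finite_simple_graph_def)
  show "\<exists>B. theta_feasible H B" using theta_feasible_exists[OF H] .
  fix B assume B: "theta_feasible H B"
  have sym: "symmetric_on (verts H) B" and psd: "psd_on (verts H) B"
    and tr: "(\<Sum>i\<in>verts H. B i i) = 1"
    using B by (auto simp: theta_feasible_iff)
  define S where "S k = (case k of None \<Rightarrow> f ` verts G | Some i \<Rightarrow> Q i)" for k
  define c where "c k = (case k of None \<Rightarrow> theta G | Some i \<Rightarrow> 1)" for k :: "'i option"
  define K where "K = insert None (Some ` I)"
  have SK: "\<Union>(S ` K) = verts H"
    using cover(1) by (auto simp: S_def K_def)
  have "(\<Sum>i\<in>\<Union>(S ` K). \<Sum>j\<in>\<Union>(S ` K). B i j) \<le> sum c K * (\<Sum>i\<in>\<Union>(S ` K). B i i)"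
  proof (rule psd_sum_le_partition[OF sym psd finH])
    show "finite K" using Q(1) by (simp add: K_def)
    show "disjoint_family_on S K"
      using Q(2) cover(2) by (auto simp: disjoint_family_on_def S_def K_def split: option.split)
    show "S k \<subseteq> verts H" if "k \<in> K" for k
      using that SK by blast
    show "0 < c k" if "k \<in> K" for k
      using one_le_theta[OF G] by (simp add: c_def split: option.split)
    show "(\<Sum>i\<in>S k. \<Sum>j\<in>S k. B i j) \<le> c k * (\<Sum>i\<in>S k. B i i)" if "k \<in> K" for k
    proof (cases k)
      case None
      then show ?thesis
        using theta_feasible_subgraph_sum_le[OF finH B f _ f_edges] cover(1) by (auto simp: S_def c_def)
    next
      case (Some i)
      with that have "i \<in> I" by (auto simp: K_def)
      then show ?thesis
        using theta_feasible_clique_sum[OF finH B Q(3)] by (simp add: S_def c_def Some)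
    qed
  qed
  moreover have "sum c K = theta G + real (card I)"
    using Q(1) by (simp add: K_def c_def sum.reindex)
  ultimately show "(\<Sum>i\<in>verts H. \<Sum>j\<in>verts H. B i j) \<le> theta G + real (card I)"
    using tr by (simp add: SK)
qed

section \<open>Splitting joins\<close>

lemma card_split_Inl_Inr:
  "finite K \<Longrightarrow> card K = card {a. Inl a \<in> K} + card {b. Inr b \<in> K}"
proof -
  assume "finite K"
  have K: "K = {a. Inl a \<in> K} <+> {b. Inr b \<in> K}"
  proof (rule set_eqI)
    show "x \<in> K \<longleftrightarrow> x \<in> {a. Inl a \<in> K} <+> {b. Inr b \<in> K}" for x
      by (cases x) auto
  qed
  have "finite {a. Inl a \<in> K}" "finite {b. Inr b \<in> K}"
    using finite_vimageI[OF \<open>finite K\<close>, of Inl] finite_vimageI[OF \<open>finite K\<close>, of Inr]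
    by (simp_all add: vimage_def)
  then show ?thesis by (subst K) (simp add: card_Plus)
qed

definition split_join :: "('a \<Rightarrow> 'a \<Rightarrow> bool) \<Rightarrow> 'a graph \<Rightarrow> 'b graph \<Rightarrow> (('a + 'b) + 'a) graph" where
  "split_join P G1 G2 =
     (Inl ` verts (join G1 G2) \<union> Inr ` verts G1,
      (image Inl) ` edges (join G1 G2) \<union>
      {{Inr u, Inl (Inl w)} | u w. u \<in> verts G1 \<and> w \<in> verts G1 \<and> P u w})"

lemma NS_join_eq_split_join: "NS_join G1 G2 = split_join (\<lambda>u w. {u, w} \<in> edges G1) G1 G2"
  by (simp add: NS_join_def split_join_def)

lemma NNS_join_eq_split_join:
  "NNS_join G1 G2 = split_join (\<lambda>u w. u \<noteq> w \<and> {u, w} \<notin> edges G1) G1 G2"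
  by (simp add: NNS_join_def split_join_def)

lemma verts_split_join:
  "verts (split_join P G1 G2) = Inl ` Inl ` verts G1 \<union> Inl ` Inr ` verts G2 \<union> Inr ` verts G1"
  by (auto simp: split_join_def join_def verts_def)

lemma doubleton_mem_image_image_iff:
  assumes "inj f"
  shows "{f x, f y} \<in> image f ` E \<longleftrightarrow> {x, y} \<in> E"
proof -
  have "inj (image f)" using assms by (simp add: inj_def inj_image_eq_iff)
  then show ?thesis using inj_image_mem_iff[of "image f" "{x, y}" E] by simp
qed

lemma edges_join_iff:
  "{Inl a, Inl b} \<in> edges (join G1 G2) \<longleftrightarrow> {a, b} \<in> edges G1"
  "{Inr c, Inr d} \<in> edges (join G1 G2) \<longleftrightarrow> {c, d} \<in> edges G2"
  "{Inl a, Inr c} \<in> edges (join G1 G2) \<longleftrightarrow> a \<in> verts G1 \<and> c \<in> verts G2"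
  by (auto simp: join_def edges_def doubleton_eq_iff doubleton_mem_image_image_iff insert_commute)

lemma edges_split_join_iff [simp]:
  "{Inl (Inl a), Inl (Inl b)} \<in> edges (split_join P G1 G2) \<longleftrightarrow> {a, b} \<in> edges G1"
  "{Inl (Inr c), Inl (Inr d)} \<in> edges (split_join P G1 G2) \<longleftrightarrow> {c, d} \<in> edges G2"
  "{Inl (Inl a), Inl (Inr c)} \<in> edges (split_join P G1 G2) \<longleftrightarrow> a \<in> verts G1 \<and> c \<in> verts G2"
  "{Inl (Inr c), Inl (Inl a)} \<in> edges (split_join P G1 G2) \<longleftrightarrow> a \<in> verts G1 \<and> c \<in> verts G2"
  "{Inr u, Inl (Inl a)} \<in> edges (split_join P G1 G2) \<longleftrightarrow> u \<in> verts G1 \<and> a \<in> verts G1 \<and> P u a"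
  "{Inl (Inl a), Inr u} \<in> edges (split_join P G1 G2) \<longleftrightarrow> u \<in> verts G1 \<and> a \<in> verts G1 \<and> P u a"
  "{Inr u, Inl (Inr c)} \<notin> edges (split_join P G1 G2)"
  "{Inl (Inr c), Inr u} \<notin> edges (split_join P G1 G2)"
  "{Inr u, Inr v} \<notin> edges (split_join P G1 G2)"
  by (auto simp: split_join_def edges_def[of "(_, _)"] doubleton_eq_iff doubleton_mem_image_image_iff
      edges_join_iff insert_commute)

lemma finite_simple_graph_join:
  assumes "finite_simple_graph G1" "finite_simple_graph G2"
  shows "finite_simple_graph (join G1 G2)"
  unfolding finite_simple_graph_def
proof (intro conjI ballI)
  let ?V = "verts (join G1 G2)"
  have V: "?V = Inl ` verts G1 \<union> Inr ` verts G2" by (simp add: join_def verts_def)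
  then show "finite ?V" using assms by (simp add: finite_simple_graph_def)
  fix e assume "e \<in> edges (join G1 G2)"
  then consider (G1) e1 where "e1 \<in> edges G1" "e = Inl ` e1"
    | (G2) e2 where "e2 \<in> edges G2" "e = Inr ` e2"
    | (cross) u w where "u \<in> verts G1" "w \<in> verts G2" "e = {Inl u, Inr w}"
    by (auto simp: join_def edges_def verts_def)
  then show "\<exists>x y. x \<in> ?V \<and> y \<in> ?V \<and> x \<noteq> y \<and> e = {x, y}"
  proof cases
    case G1
    then obtain x y where "x \<in> verts G1" "y \<in> verts G1" "x \<noteq> y" "e1 = {x, y}"
      using assms(1) by (auto simp: finite_simple_graph_def)
    then show ?thesis using G1 V by (intro exI[of _ "Inl x"] exI[of _ "Inl y"]) simp
  next
    case G2
    then obtain x y where "x \<in> verts G2" "y \<in> verts G2" "x \<noteq> y" "e2 = {x, y}"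
      using assms(2) by (auto simp: finite_simple_graph_def)
    then show ?thesis using G2 V by (intro exI[of _ "Inr x"] exI[of _ "Inr y"]) simp
  next
    case cross
    then show ?thesis using V by (intro exI[of _ "Inl u"] exI[of _ "Inr w"]) simp
  qed
qed

lemma finite_simple_graph_split_join:
  assumes "finite_simple_graph G1" "finite_simple_graph G2"
  shows "finite_simple_graph (split_join P G1 G2)"
  unfolding finite_simple_graph_def
proof (intro conjI ballI)
  let ?V = "verts (split_join P G1 G2)"
  have V: "?V = Inl ` verts (join G1 G2) \<union> Inr ` verts G1" by (simp add: split_join_def verts_def)
  then show "finite ?V"
    using assms finite_simple_graph_join[OF assms] by (simp add: finite_simple_graph_def)
  fix e assume "e \<in> edges (split_join P G1 G2)"
  then consider (join) e' where "e' \<in> edges (join G1 G2)" "e = Inl ` e'"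
    | (new) u w where "u \<in> verts G1" "w \<in> verts G1" "e = {Inr u, Inl (Inl w)}"
    by (auto simp: split_join_def edges_def)
  then show "\<exists>x y. x \<in> ?V \<and> y \<in> ?V \<and> x \<noteq> y \<and> e = {x, y}"
  proof cases
    case join
    then obtain x y where "x \<in> verts (join G1 G2)" "y \<in> verts (join G1 G2)" "x \<noteq> y" "e' = {x, y}"
      using finite_simple_graph_join[OF assms] by (auto simp: finite_simple_graph_def)
    then show ?thesis using join V by (intro exI[of _ "Inl x"] exI[of _ "Inl y"]) simp
  next
    case new
    then show ?thesis using V by (intro exI[of _ "Inr u"] exI[of _ "Inl (Inl w)"]) (simp add: join_def verts_def)
  qed
qed

lemma sum_verts_split_join:
  assumes "finite (verts G1)" "finite (verts G2)"
  shows "(\<Sum>i\<in>verts (split_join P G1 G2). f i) =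
    (\<Sum>a\<in>verts G1. f (Inl (Inl a))) + (\<Sum>c\<in>verts G2. f (Inl (Inr c))) + (\<Sum>u\<in>verts G1. f (Inr u))"
proof -
  have "(\<Sum>i\<in>verts (split_join P G1 G2). f i) =
      sum f (Inl ` Inl ` verts G1) + sum f (Inl ` Inr ` verts G2) + sum f (Inr ` verts G1)"
    unfolding verts_split_join using assms
    by (subst sum.union_disjoint, force, force, force)+ simp
  also have "\<dots> = (\<Sum>a\<in>verts G1. f (Inl (Inl a))) + (\<Sum>c\<in>verts G2. f (Inl (Inr c))) + (\<Sum>u\<in>verts G1. f (Inr u))"
    by (simp add: sum.reindex)
  finally show ?thesis .
qed

lemma alpha_split_join_ge:
  assumes "finite (verts G1)" "finite (verts G2)"
  shows "card (verts G1) + alpha G2 \<le> alpha (split_join P G1 G2)"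
proof -
  obtain S where S: "independent_set G2 S" "card S = alpha G2"
    using alpha_attained[OF assms(2)] by blast
  have "S \<subseteq> verts G2" using S(1) by (simp add: independent_set_def)
  define T :: "(('a + 'b) + 'a) set" where "T = Inl ` Inr ` S \<union> Inr ` verts G1"
  have "independent_set (split_join P G1 G2) T"
    unfolding independent_set_def
  proof (intro conjI ballI)
    show "T \<subseteq> verts (split_join P G1 G2)"
      using \<open>S \<subseteq> verts G2\<close> by (auto simp: T_def verts_split_join)
    show "{x, y} \<notin> edges (split_join P G1 G2)" if "x \<in> T" "y \<in> T" for x y
      using that S(1) by (auto simp: T_def independent_set_def)
  qed
  moreover have "card T = card S + card (verts G1)"
    unfolding T_def using finite_subset[OF \<open>S \<subseteq> verts G2\<close> assms(2)] assms(1)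
    by (subst card_Un_disjoint) (auto simp: card_image)
  ultimately show ?thesis
    using card_le_alpha[of "split_join P G1 G2" T] S(2) assms by (simp add: verts_split_join)
qed

lemma card_clique_split_join_le:
  assumes "finite (verts G1)" "finite (verts G2)" "verts G2 \<noteq> {}"
    and K: "clique (split_join P G1 G2) K"
  shows "card K \<le> omega G1 + omega G2"
proof -
  let ?H = "split_join P G1 G2"
  define K1 K2 KD where "K1 = {a. Inl (Inl a) \<in> K}" and "K2 = {c. Inl (Inr c) \<in> K}"
    and "KD = {u. Inr u \<in> K}"
  have edge: "{x, y} \<in> edges ?H" if "x \<in> K" "y \<in> K" "x \<noteq> y" for x y
    using K that by (simp add: clique_def)
  have "clique G1 K1"
    unfolding clique_def
  proof (intro conjI ballI impI)
    show "K1 \<subseteq> verts G1" using K by (auto simp: clique_def K1_def verts_split_join)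
    show "{a, b} \<in> edges G1" if "a \<in> K1" "b \<in> K1" "a \<noteq> b" for a b
      using edge[of "Inl (Inl a)" "Inl (Inl b)"] that by (simp add: K1_def)
  qed
  have "clique G2 K2"
    unfolding clique_def
  proof (intro conjI ballI impI)
    show "K2 \<subseteq> verts G2" using K by (auto simp: clique_def K2_def verts_split_join)
    show "{c, d} \<in> edges G2" if "c \<in> K2" "d \<in> K2" "c \<noteq> d" for c d
      using edge[of "Inl (Inr c)" "Inl (Inr d)"] that by (simp add: K2_def)
  qed
  have "card K2 + card KD \<le> omega G2"
  proof (cases "KD = {}")
    case True
    then show ?thesis using card_le_omega[OF assms(2) \<open>clique G2 K2\<close>] by simp
  next
    case False
    then obtain u where "u \<in> KD" by blast
    then have "K2 = {}" "KD = {u}"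
      using edge[of "Inr u" "Inl (Inr _)"] edge[of "Inr u" "Inr _"] by (auto simp: K2_def KD_def)
    then show ?thesis using one_le_omega[OF assms(2,3)] by simp
  qed
  moreover have "card K = card K1 + card K2 + card KD"
  proof -
    have "finite K"
      using K assms(1,2) finite_subset by (auto simp: clique_def verts_split_join)
    then have "finite {x. Inl x \<in> K}" using finite_vimageI[of K Inl] by (simp add: vimage_def)
    then show ?thesis
      using card_split_Inl_Inr[of K] card_split_Inl_Inr[of "{x. Inl x \<in> K}"] \<open>finite K\<close>
      by (simp add: K1_def K2_def KD_def)
  qed
  ultimately show ?thesis
    using card_le_omega[OF assms(1) \<open>clique G1 K1\<close>] by simp
qed

lemma omega_split_join:
  assumes "finite (verts G1)" "finite (verts G2)" "verts G2 \<noteq> {}"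
  shows "omega (split_join P G1 G2) = omega G1 + omega G2"
proof (rule antisym)
  let ?H = "split_join P G1 G2"
  obtain K where "clique ?H K" "card K = omega ?H"
    using omega_attained[of ?H] assms(1,2) by (auto simp: verts_split_join)
  then show "omega ?H \<le> omega G1 + omega G2"
    using card_clique_split_join_le[OF assms] by metis
next
  let ?H = "split_join P G1 G2"
  obtain K1 where K1: "clique G1 K1" "card K1 = omega G1" using omega_attained[OF assms(1)] by blast
  obtain K2 where K2: "clique G2 K2" "card K2 = omega G2" using omega_attained[OF assms(2)] by blast
  have "K1 \<subseteq> verts G1" "K2 \<subseteq> verts G2" using K1(1) K2(1) by (auto simp: clique_def)
  define K :: "(('a + 'b) + 'a) set" where "K = Inl ` Inl ` K1 \<union> Inl ` Inr ` K2"
  have "clique ?H K"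
    using K1(1) K2(1) \<open>K1 \<subseteq> verts G1\<close> \<open>K2 \<subseteq> verts G2\<close>
    unfolding clique_def K_def verts_split_join by auto blast+
  moreover have "card K = card K1 + card K2"
    unfolding K_def
    using finite_subset[OF \<open>K1 \<subseteq> verts G1\<close> assms(1)] finite_subset[OF \<open>K2 \<subseteq> verts G2\<close> assms(2)]
    by (subst card_Un_disjoint) (auto simp: card_image)
  ultimately show "omega G1 + omega G2 \<le> omega ?H"
    using card_le_omega[of ?H K] K1(2) K2(2) assms by (simp add: verts_split_join)
qed

lemma chi_split_join_le:
  assumes "finite_simple_graph G1" "finite_simple_graph G2" "verts G2 \<noteq> {}"
  shows "chi (split_join P G1 G2) \<le> chi G1 + chi G2"
proof -
  let ?H = "split_join P G1 G2"
  obtain f1 where f1: "proper_coloring G1 (chi G1) f1" using chi_attained[OF assms(1)] by blast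
  obtain f2 where f2: "proper_coloring G2 (chi G2) f2" using chi_attained[OF assms(2)] by blast
  have "0 < chi G2" using f2 assms(3) by (auto simp: proper_coloring_def)
  text \<open>The new vertices are adjacent only to vertices of \<open>G1\<close>, so they may all share one colour of \<open>G2\<close>.\<close>
  define f :: "('a + 'b) + 'a \<Rightarrow> nat"
    where "f x = (case x of Inl (Inl a) \<Rightarrow> f1 a | Inl (Inr c) \<Rightarrow> chi G1 + f2 c | Inr _ \<Rightarrow> chi G1)"
    for x
  have "proper_coloring ?H (chi G1 + chi G2) f"
    unfolding proper_coloring_def
  proof (intro conjI ballI impI)
    show "f x < chi G1 + chi G2" if "x \<in> verts ?H" for x
      using that f1 f2 \<open>0 < chi G2\<close> by (auto simp: f_def proper_coloring_def verts_split_join)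
    show "f x \<noteq> f y" if "x \<in> verts ?H" "y \<in> verts ?H" "{x, y} \<in> edges ?H" for x y
      using that f1 f2 by (auto simp: f_def proper_coloring_def verts_split_join)
  qed
  then show ?thesis by (rule chi_le)
qed

lemma chi_split_join_ge:
  assumes "finite_simple_graph G1" "finite_simple_graph G2"
  shows "chi G1 + chi G2 \<le> chi (split_join P G1 G2)"
proof -
  let ?H = "split_join P G1 G2"
  have fin: "finite (verts G1)" "finite (verts G2)"
    using assms by (auto simp: finite_simple_graph_def)
  obtain f where f: "proper_coloring ?H (chi ?H) f"
    using chi_attained[OF finite_simple_graph_split_join[OF assms(1,2)]] by blast
  define A C where "A = (\<lambda>a. f (Inl (Inl a))) ` verts G1" and "C = (\<lambda>c. f (Inl (Inr c))) ` verts G2"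
  have "chi G1 \<le> card A"
    unfolding A_def using f by (intro chi_le_card_image fin) (auto simp: proper_coloring_def verts_split_join)
  moreover have "chi G2 \<le> card C"
    unfolding C_def using f by (intro chi_le_card_image fin) (auto simp: proper_coloring_def verts_split_join)
  moreover have "A \<inter> C = {}"
    using f by (fastforce simp: A_def C_def proper_coloring_def verts_split_join)
  moreover have "A \<union> C \<subseteq> {..<chi ?H}"
    using f by (auto simp: A_def C_def proper_coloring_def verts_split_join)
  ultimately show ?thesis
    using card_Un_disjoint[of A C] card_mono[of "{..<chi ?H}" "A \<union> C"] fin
    by (simp add: A_def C_def)
qed

lemma chi_split_join:
  assumes "finite_simple_graph G1" "finite_simple_graph G2" "verts G2 \<noteq> {}"
  shows "chi (split_join P G1 G2) = chi G1 + chi G2"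
  using chi_split_join_le[OF assms] chi_split_join_ge[OF assms(1,2)] by (rule antisym)

fun bordered :: "'b set \<Rightarrow> ('b \<Rightarrow> 'b \<Rightarrow> real) \<Rightarrow> ('a + 'b) + 'a \<Rightarrow> ('a + 'b) + 'a \<Rightarrow> real" where
  "bordered V B (Inl (Inr c)) (Inl (Inr d)) = (\<Sum>a\<in>V. \<Sum>b\<in>V. B a b) * B c d"
| "bordered V B (Inl (Inr c)) (Inr _) = (\<Sum>a\<in>V. B a c)"
| "bordered V B (Inr _) (Inl (Inr d)) = (\<Sum>a\<in>V. B a d)"
| "bordered V B (Inr _) (Inr _) = 1"
| "bordered V B _ _ = 0"

lemma quad_form_bordered:
  assumes "finite (verts G1)" "finite (verts G2)"
  shows "quad_form (verts (split_join P G1 G2)) (bordered (verts G2) B) x =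
    (\<Sum>u\<in>verts G1. x (Inr u))\<^sup>2
    + 2 * (\<Sum>u\<in>verts G1. x (Inr u)) * (\<Sum>d\<in>verts G2. (\<Sum>c\<in>verts G2. B c d) * x (Inl (Inr d)))
    + (\<Sum>c\<in>verts G2. \<Sum>d\<in>verts G2. B c d) * quad_form (verts G2) B (\<lambda>c. x (Inl (Inr c)))"
proof -
  define X L s where "X = (\<Sum>u\<in>verts G1. x (Inr u))"
    and "L = (\<Sum>d\<in>verts G2. (\<Sum>c\<in>verts G2. B c d) * x (Inl (Inr d)))"
    and "s = (\<Sum>c\<in>verts G2. \<Sum>d\<in>verts G2. B c d)"
  have "quad_form (verts (split_join P G1 G2)) (bordered (verts G2) B) x =
      (\<Sum>c\<in>verts G2. \<Sum>d\<in>verts G2. x (Inl (Inr c)) * (s * B c d) * x (Inl (Inr d)))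
      + (\<Sum>c\<in>verts G2. \<Sum>u\<in>verts G1. x (Inl (Inr c)) * (\<Sum>a\<in>verts G2. B a c) * x (Inr u))
      + ((\<Sum>u\<in>verts G1. \<Sum>d\<in>verts G2. x (Inr u) * (\<Sum>a\<in>verts G2. B a d) * x (Inl (Inr d)))
      + (\<Sum>u\<in>verts G1. \<Sum>v\<in>verts G1. x (Inr u) * x (Inr v)))"
    using assms by (simp add: quad_form_def sum_verts_split_join sum.distrib s_def)
  also have "\<dots> = s * quad_form (verts G2) B (\<lambda>c. x (Inl (Inr c))) + X * L + (X * L + X\<^sup>2)"
  proof -
    have "(\<Sum>c\<in>verts G2. \<Sum>d\<in>verts G2. x (Inl (Inr c)) * (s * B c d) * x (Inl (Inr d)))
        = s * quad_form (verts G2) B (\<lambda>c. x (Inl (Inr c)))"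
      by (simp add: quad_form_def sum_distrib_left mult_ac)
    moreover have "(\<Sum>c\<in>verts G2. \<Sum>u\<in>verts G1. x (Inl (Inr c)) * (\<Sum>a\<in>verts G2. B a c) * x (Inr u))
        = X * L"
      by (subst sum.swap) (simp add: L_def X_def sum_product mult_ac)
    moreover have "(\<Sum>u\<in>verts G1. \<Sum>d\<in>verts G2. x (Inr u) * (\<Sum>a\<in>verts G2. B a d) * x (Inl (Inr d)))
        = X * L"
      by (simp add: L_def X_def sum_product mult_ac)
    moreover have "(\<Sum>u\<in>verts G1. \<Sum>v\<in>verts G1. x (Inr u) * x (Inr v)) = X\<^sup>2"
      by (simp add: X_def power2_eq_square sum_product)
    ultimately show ?thesis by simp
  qed
  finally show ?thesis unfolding X_def[symmetric] L_def[symmetric] s_def[symmetric] by simp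
qed

lemma psd_on_bordered:
  assumes "finite (verts G1)" "finite (verts G2)" "symmetric_on (verts G2) B" "psd_on (verts G2) B"
  shows "psd_on (verts (split_join P G1 G2)) (bordered (verts G2) B)"
  unfolding psd_on_def quad_form_bordered[OF assms(1,2)] by (simp add: psd_border_nonneg[OF assms(3,4)])

lemma sum_bordered:
  assumes "finite (verts G1)" "finite (verts G2)"
  shows "(\<Sum>i\<in>verts (split_join P G1 G2). \<Sum>j\<in>verts (split_join P G1 G2). bordered (verts G2) B i j)
    = (real (card (verts G1)) + (\<Sum>i\<in>verts G2. \<Sum>j\<in>verts G2. B i j))\<^sup>2"
proof -
  define s where "s = (\<Sum>i\<in>verts G2. \<Sum>j\<in>verts G2. B i j)"
  have "quad_form (verts G2) B (\<lambda>_. 1) = s" by (simp add: quad_form_def s_def)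
  moreover have "(\<Sum>d\<in>verts G2. (\<Sum>c\<in>verts G2. B c d) * 1) = s"
    unfolding s_def by (subst sum.swap) simp
  moreover have "(\<Sum>i\<in>verts (split_join P G1 G2). \<Sum>j\<in>verts (split_join P G1 G2). bordered (verts G2) B i j)
      = quad_form (verts (split_join P G1 G2)) (bordered (verts G2) B) (\<lambda>_. 1)"
    by (simp add: quad_form_def)
  ultimately show ?thesis
    unfolding quad_form_bordered[OF assms] s_def[symmetric] by (simp add: power2_eq_square algebra_simps)
qed

lemma theta_feasible_sum_le_theta_split_join:
  assumes "finite (verts G1)" "finite (verts G2)" "theta_feasible G2 B"
    and pos: "0 < real (card (verts G1)) + (\<Sum>i\<in>verts G2. \<Sum>j\<in>verts G2. B i j)"
  shows "real (card (verts G1)) + (\<Sum>i\<in>verts G2. \<Sum>j\<in>verts G2. B i j) \<le> theta (split_join P G1 G2)"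
proof -
  let ?H = "split_join P G1 G2"
  define c where "c = real (card (verts G1)) + (\<Sum>i\<in>verts G2. \<Sum>j\<in>verts G2. B i j)"
  define M :: "('a + 'b) + 'a \<Rightarrow> ('a + 'b) + 'a \<Rightarrow> real"
    where "M i j = bordered (verts G2) B i j / c" for i j
  have sym: "symmetric_on (verts G2) B" and psd: "psd_on (verts G2) B"
    and tr: "(\<Sum>i\<in>verts G2. B i i) = 1"
    and zero: "\<And>i j. i \<in> verts G2 \<Longrightarrow> j \<in> verts G2 \<Longrightarrow> {i, j} \<in> edges G2 \<Longrightarrow> B i j = 0"
    using assms(3) by (auto simp: theta_feasible_iff)
  have "0 < c" using pos by (simp add: c_def)
  have "theta_feasible ?H M"
    unfolding theta_feasible_iff
  proof (intro conjI ballI impI)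
    show "symmetric_on (verts ?H) M"
      using sym by (auto simp: symmetric_on_def M_def verts_split_join)
    show "psd_on (verts ?H) M"
      unfolding M_def using psd_on_bordered[OF assms(1,2) sym psd] \<open>0 < c\<close> by (rule psd_on_divide)
    show "(\<Sum>i\<in>verts ?H. M i i) = 1"
      using assms(1,2) tr \<open>0 < c\<close>
      by (simp add: M_def sum_verts_split_join c_def add.commute flip: sum_divide_distrib sum_distrib_left)
    show "M i j = 0" if "i \<in> verts ?H" "j \<in> verts ?H" "{i, j} \<in> edges ?H" for i j
      using that zero by (auto simp: M_def verts_split_join)
  qed
  moreover have "(\<Sum>i\<in>verts ?H. \<Sum>j\<in>verts ?H. M i j) = c"
    using sum_bordered[OF assms(1,2), where P = P and B = B] \<open>0 < c\<close>
    by (simp add: M_def c_def power2_eq_square flip: sum_divide_distrib)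
  ultimately show ?thesis
    using theta_feasible_sum_le_theta[of ?H M] assms(1,2) by (simp add: verts_split_join c_def)
qed

lemma theta_split_join_ge:
  assumes "finite_simple_graph G1" "finite_simple_graph G2" "verts G2 \<noteq> {}"
  shows "real (card (verts G1)) + theta G2 \<le> theta (split_join P G1 G2)"
proof -
  let ?H = "split_join P G1 G2"
  have fin: "finite (verts G1)" "finite (verts G2)"
    using assms by (auto simp: finite_simple_graph_def)
  have "1 \<le> theta ?H"
    using one_le_theta[OF finite_simple_graph_split_join[OF assms(1,2)]] assms(3)
    by (simp add: verts_split_join)
  have "theta G2 \<le> theta ?H - real (card (verts G1))"
  proof (rule theta_le)
    show "\<exists>B. theta_feasible G2 B" using theta_feasible_exists[OF assms(2,3)] .
    fix B assume B: "theta_feasible G2 B"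
    show "(\<Sum>i\<in>verts G2. \<Sum>j\<in>verts G2. B i j) \<le> theta ?H - real (card (verts G1))"
    proof (cases "0 < real (card (verts G1)) + (\<Sum>i\<in>verts G2. \<Sum>j\<in>verts G2. B i j)")
      case True
      then show ?thesis using theta_feasible_sum_le_theta_split_join[OF fin B True, where P = P] by simp
    next
      case False
      then show ?thesis using \<open>1 \<le> theta ?H\<close> by linarith
    qed
  qed
  then show ?thesis by simp
qed

lemma theta_split_join_le:
  assumes "finite_simple_graph G1" "finite_simple_graph G2" "verts G2 \<noteq> {}"
    and \<pi>: "bij_betw \<pi> (verts G1) (verts G1)" "\<And>v. v \<in> verts G1 \<Longrightarrow> P v (\<pi> v)"
  shows "theta (split_join P G1 G2) \<le> theta G2 + real (card (verts G1))"
proof (rule theta_le_theta_plus_card_cliques)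
  let ?H = "split_join P G1 G2"
  show "finite_simple_graph ?H" using finite_simple_graph_split_join[OF assms(1,2)] .
  show "verts ?H \<noteq> {}" using assms(3) by (simp add: verts_split_join)
  show "finite (verts G1)" using assms(1) by (simp add: finite_simple_graph_def)
  have "\<pi> ` verts G1 = verts G1" "inj_on \<pi> (verts G1)"
    using \<pi>(1) by (auto simp: bij_betw_def)
  then show "disjoint_family_on (\<lambda>v. {Inl (Inl (\<pi> v)), Inr v}) (verts G1)"
    and "verts ?H = (\<lambda>c. Inl (Inr c)) ` verts G2 \<union> (\<Union>v\<in>verts G1. {Inl (Inl (\<pi> v)), Inr v})"
    by (auto simp: disjoint_family_on_def inj_on_eq_iff verts_split_join)
  show "clique ?H {Inl (Inl (\<pi> v)), Inr v}" if "v \<in> verts G1" for v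
  proof -
    have "\<pi> v \<in> verts G1" using that \<open>\<pi> ` verts G1 = verts G1\<close> by blast
    then show ?thesis using that \<pi>(2) by (simp add: clique_def verts_split_join)
  qed
qed (use assms(2,3) in \<open>auto simp: inj_on_def verts_split_join\<close>)

lemma theta_split_join_eq:
  assumes "finite_simple_graph G1" "finite_simple_graph G2" "verts G2 \<noteq> {}"
    and "\<exists>\<pi>. bij_betw \<pi> (verts G1) (verts G1) \<and> (\<forall>v\<in>verts G1. P v (\<pi> v))"
  shows "theta (split_join P G1 G2) = real (card (verts G1)) + theta G2"
proof -
  obtain \<pi> where "bij_betw \<pi> (verts G1) (verts G1)" "\<forall>v\<in>verts G1. P v (\<pi> v)"
    using assms(4) by blast
  then have "theta (split_join P G1 G2) \<le> theta G2 + real (card (verts G1))"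
    by (intro theta_split_join_le[OF assms(1-3)]) auto
  then show ?thesis using theta_split_join_ge[OF assms(1-3), where P = P] by linarith
qed

lemma alpha_split_join_eq:
  assumes "finite_simple_graph G1" "finite_simple_graph G2" "verts G2 \<noteq> {}"
    and "\<exists>\<pi>. bij_betw \<pi> (verts G1) (verts G1) \<and> (\<forall>v\<in>verts G1. P v (\<pi> v))"
    and "real (alpha G2) = theta G2"
  shows "alpha (split_join P G1 G2) = card (verts G1) + alpha G2"
proof -
  have "real (alpha (split_join P G1 G2)) \<le> theta (split_join P G1 G2)"
    using alpha_le_theta[OF finite_simple_graph_split_join[OF assms(1,2)]] assms(3)
    by (simp add: verts_split_join)
  also have "\<dots> = real (card (verts G1) + alpha G2)"
    using theta_split_join_eq[OF assms(1-4)] assms(5) by simp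
  finally show ?thesis
    using alpha_split_join_ge[of G1 G2 P] assms(1,2) by (simp add: finite_simple_graph_def)
qed

theorem mainTheorem5:
  fixes G1 :: "'a graph" and G2 :: "'b graph"
  assumes "finite_simple_graph G1" and "finite_simple_graph G2"
    and "verts G2 \<noteq> {}"
  shows
    "alpha (NS_join G1 G2) \<ge> card (verts G1) + alpha G2 \<and>
     alpha (NNS_join G1 G2) \<ge> card (verts G1) + alpha G2 \<and>
     omega (NS_join G1 G2) = omega G1 + omega G2 \<and>
     omega G1 + omega G2 = omega (NNS_join G1 G2) \<and>
     chi (NS_join G1 G2) = chi G1 + chi G2 \<and>
     chi G1 + chi G2 = chi (NNS_join G1 G2) \<and>
     theta (NS_join G1 G2) \<ge> real (card (verts G1)) + theta G2 \<and>
     theta (NNS_join G1 G2) \<ge> real (card (verts G1)) + theta G2 \<and>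
     ((\<exists>\<pi>. bij_betw \<pi> (verts G1) (verts G1) \<and> (\<forall>v\<in>verts G1. {v, \<pi> v} \<in> edges G1)) \<longrightarrow>
        theta (NS_join G1 G2) = real (card (verts G1)) + theta G2) \<and>
     ((\<exists>\<pi>. bij_betw \<pi> (verts G1) (verts G1) \<and>
           (\<forall>v\<in>verts G1. \<pi> v \<noteq> v \<and> {v, \<pi> v} \<notin> edges G1)) \<longrightarrow>
        theta (NNS_join G1 G2) = real (card (verts G1)) + theta G2) \<and>
     ((\<exists>\<pi>. bij_betw \<pi> (verts G1) (verts G1) \<and> (\<forall>v\<in>verts G1. {v, \<pi> v} \<in> edges G1)) \<and>
        real (alpha G2) = theta G2 \<longrightarrow>
        alpha (NS_join G1 G2) = card (verts G1) + alpha G2) \<and>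
     ((\<exists>\<pi>. bij_betw \<pi> (verts G1) (verts G1) \<and>
           (\<forall>v\<in>verts G1. \<pi> v \<noteq> v \<and> {v, \<pi> v} \<notin> edges G1)) \<and>
        real (alpha G2) = theta G2 \<longrightarrow>
        alpha (NNS_join G1 G2) = card (verts G1) + alpha G2)"
proof -
  have fin: "finite (verts G1)" "finite (verts G2)"
    using assms(1,2) by (auto simp: finite_simple_graph_def)
  have perm_NNS: "(\<exists>\<pi>. bij_betw \<pi> (verts G1) (verts G1) \<and> (\<forall>v\<in>verts G1. \<pi> v \<noteq> v \<and> {v, \<pi> v} \<notin> edges G1))
      \<longleftrightarrow> (\<exists>\<pi>. bij_betw \<pi> (verts G1) (verts G1) \<and> (\<forall>v\<in>verts G1. v \<noteq> \<pi> v \<and> {v, \<pi> v} \<notin> edges G1))"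
    by metis
  show ?thesis
    unfolding NS_join_eq_split_join NNS_join_eq_split_join perm_NNS
    using alpha_split_join_ge[OF fin] omega_split_join[OF fin assms(3)] chi_split_join[OF assms]
      theta_split_join_ge[OF assms] theta_split_join_eq[OF assms] alpha_split_join_eq[OF assms]
    by simp
qed

end
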